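(* The atom squaring function $\mathbb A^*\to\mathbb A^*$, which maps $a_1\cdots a_n$ to the concatenation of all two-letter words $a_ia_j$ for $i,j\in\{1,\ldots,n\}$ taken in lexicographic order of $(i,j)$ (i.e. $a_1a_1\,a_1a_2\cdots a_1a_n\,a_2a_1\cdots a_na_n$), is not computed by any pebble transducer with atoms that has at most two pebbles.
   Context: $\mathbb A$ is an infinite set of atoms. A pebble transducer with atoms, with input alphabet $\Sigma+\mathbb A$ and output alphabet $\Gamma+\mathbb A$ ($\Sigma,\Gamma$ finite), is given by a finite set of states $q$, each with a stack height $\dim(q)\in\{0,1,\ldots\}$, MSO universe formulas $\varphi_q(x_1,\ldots,x_{\dim(q)})$, and MSO formulas defining a linear order on configurations; all formulas are over the vocabulary $\{\le\}\cup\{a(x):a\in\Sigma\}$ of the input string (positions carrying atoms satisfy no label predicate). A configuration on input $w$ is a pair $(q,\bar a)$ with $\bar a$ a tuple of positions of length $\dim(q)$ satisfying $\varphi_q$ (the pebble stack; its last entry is the head). Stack discipline: for any two consecutive configurations in the order, one stack is a prefix of the other, or both have equal length and agree except on the last entry. Each state has an output which is a letter of $\Gamma$ or the symbol “atom under the head”, which outputs the atom at the head position if it carries an atom and the empty string otherwise. The output on $w$ is the concatenation of outputs of all configurations in the defined order. The number of pebbles is the maximal stack height. *)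

theory Defs
  imports Main "HOL-Library.Sublist"
begin

text \<open>First-order variables and second-order variables are indexed by
natural numbers (two separate name spaces).  Positions carrying atoms satisfy no label
predicate; atoms are otherwise invisible to formulas.\<close>

datatype 's mso =
    Lab 's nat
  | Le nat nat
  | Mem nat nat
  | Neg "'s mso"
  | Conj "'s mso" "'s mso"
  | ExFO nat "'s mso"
  | ExSO nat "'s mso"

fun fvFO :: "'s mso \<Rightarrow> nat set" where
  "fvFO (Lab a x) = {x}"
| "fvFO (Le x y) = {x, y}"
| "fvFO (Mem x X) = {x}"
| "fvFO (Neg f) = fvFO f"
| "fvFO (Conj f g) = fvFO f \<union> fvFO g"
| "fvFO (ExFO x f) = fvFO f - {x}"
| "fvFO (ExSO X f) = fvFO f"

fun fvSO :: "'s mso \<Rightarrow> nat set" where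
  "fvSO (Lab a x) = {}"
| "fvSO (Le x y) = {}"
| "fvSO (Mem x X) = {X}"
| "fvSO (Neg f) = fvSO f"
| "fvSO (Conj f g) = fvSO f \<union> fvSO g"
| "fvSO (ExFO x f) = fvSO f"
| "fvSO (ExSO X f) = fvSO f - {X}"

fun sat :: "('s + 'atom) list \<Rightarrow> (nat \<Rightarrow> nat) \<Rightarrow> (nat \<Rightarrow> nat set) \<Rightarrow> 's mso \<Rightarrow> bool" where
  "sat w nu mu (Lab a x) = (nu x < length w \<and> w ! nu x = Inl a)"
| "sat w nu mu (Le x y) = (nu x \<le> nu y)"
| "sat w nu mu (Mem x X) = (nu x \<in> mu X)"
| "sat w nu mu (Neg f) = (\<not> sat w nu mu f)"
| "sat w nu mu (Conj f g) = (sat w nu mu f \<and> sat w nu mu g)"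
| "sat w nu mu (ExFO x f) = (\<exists>p < length w. sat w (nu(x := p)) mu f)"
| "sat w nu mu (ExSO X f) = (\<exists>P \<subseteq> {..<length w}. sat w nu (mu(X := P)) f)"

datatype 'g outp = OutLetter 'g | OutHeadAtom

text \<open>States form the finite type 'q.  univ q is the universe formula phi_q with free
first-order variables 0 ..< dim q (the pebble stack x_1..x_dim(q)); ord p q defines
(p, as) <= (q, bs), with as assigned to variables 0 ..< dim p and bs to variables
dim p ..< dim p + dim q.\<close>

record ('s, 'g, 'q) pebble_transducer =
  dim  :: "'q \<Rightarrow> nat"
  univ :: "'q \<Rightarrow> 's mso"
  ord  :: "'q \<Rightarrow> 'q \<Rightarrow> 's mso"
  out  :: "'q \<Rightarrow> 'g outp"

definition configs :: "('s, 'g, 'q) pebble_transducer \<Rightarrow> ('s + 'atom) list \<Rightarrow> ('q \<times> nat list) set" where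
  "configs T w = {(q, as). length as = dim T q \<and> (\<forall>i\<in>set as. i < length w)
                     \<and> sat w (\<lambda>i. as ! i) (\<lambda>_. {}) (univ T q)}"

definition conf_ord :: "('s, 'g, 'q) pebble_transducer \<Rightarrow> ('s + 'atom) list
                        \<Rightarrow> (('q \<times> nat list) \<times> ('q \<times> nat list)) set" where
  "conf_ord T w = {(c, d). c \<in> configs T w \<and> d \<in> configs T w
                     \<and> sat w (\<lambda>i. (snd c @ snd d) ! i) (\<lambda>_. {}) (ord T (fst c) (fst d))}"

definition sorted_configs :: "('s, 'g, 'q) pebble_transducer \<Rightarrow> ('s + 'atom) list \<Rightarrow> ('q \<times> nat list) list" where
  "sorted_configs T w = (THE xs. set xs = configs T w \<and> distinct xs
                           \<and> sorted_wrt (\<lambda>c d. (c, d) \<in> conf_ord T w) xs)"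

definition stack_ok :: "('q \<times> nat list) \<Rightarrow> ('q \<times> nat list) \<Rightarrow> bool" where
  "stack_ok c d = (prefix (snd c) (snd d) \<or> prefix (snd d) (snd c)
                   \<or> (length (snd c) = length (snd d) \<and> butlast (snd c) = butlast (snd d)))"

definition valid_transducer :: "('s, 'g, 'q::finite) pebble_transducer \<Rightarrow> 'atom itself \<Rightarrow> bool" where
  "valid_transducer T _ =
     ((\<forall>q. fvFO (univ T q) \<subseteq> {..<dim T q} \<and> fvSO (univ T q) = {})
    \<and> (\<forall>p q. fvFO (ord T p q) \<subseteq> {..<dim T p + dim T q} \<and> fvSO (ord T p q) = {})
    \<and> (\<forall>w :: ('s + 'atom) list.
          linear_order_on (configs T w) (conf_ord T w)
        \<and> (\<forall>i. Suc i < length (sorted_configs T w) \<longrightarrow>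
               stack_ok (sorted_configs T w ! i) (sorted_configs T w ! Suc i))))"

definition num_pebbles :: "('s, 'g, 'q::finite) pebble_transducer \<Rightarrow> nat" where
  "num_pebbles T = Max (range (dim T))"

fun conf_out :: "('s, 'g, 'q) pebble_transducer \<Rightarrow> ('s + 'atom) list \<Rightarrow> ('q \<times> nat list) \<Rightarrow> ('g + 'atom) list" where
  "conf_out T w (q, as) =
     (case out T q of
        OutLetter g \<Rightarrow> [Inl g]
      | OutHeadAtom \<Rightarrow> (if as \<noteq> [] then (case w ! last as of Inr a \<Rightarrow> [Inr a] | Inl _ \<Rightarrow> []) else []))"

definition run :: "('s, 'g, 'q) pebble_transducer \<Rightarrow> ('s + 'atom) list \<Rightarrow> ('g + 'atom) list" where
  "run T w = concat (map (conf_out T w) (sorted_configs T w))"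

definition atom_square :: "'atom list \<Rightarrow> 'atom list" where
  "atom_square as = concat (map (\<lambda>a. concat (map (\<lambda>b. [a, b]) as)) as)"

definition computes_atom_square :: "('s, 'g, 'q) pebble_transducer \<Rightarrow> 'atom itself \<Rightarrow> bool" where
  "computes_atom_square T _ =
     (\<forall>u :: 'atom list. run T (map Inr u :: ('s + 'atom) list) = map Inr (atom_square u))"

end

theory Submission
  imports Defs "HOL-Library.Cardinality"
begin

text \<open>
  Let k be the number of states and run the transducer on n distinct atoms.  Each configuration
  emits at most one letter, so the run has at least 2n^2 configurations, while at most k(n+1)
  of them carry fewer than two pebbles.  By the stack discipline a block of consecutive
  two-pebble configurations keeps its first pebble and only moves the head, and each of them
  emits the atom under its head.  In the square, every even output position carries the atom of
  the current row, which changes only every 2n positions; so within 4k+2 consecutive outputs the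
  heads at the 2k+1 even positions take at most two values, leaving only 2k distinct
  configurations for 2k+1 slots.  Hence every 4k+2 consecutive configurations contain one with at
  most one pebble, and 2n^2/(4k+2) \<le> k(n+1), which fails for n = (4k+2)(k+1).
\<close>

lemma sorted_wrt_list_exists:
  assumes "finite F" "F \<subseteq> A" "trans r" "total_on A r"
  shows "\<exists>xs. set xs = F \<and> distinct xs \<and> sorted_wrt (\<lambda>c d. (c, d) \<in> r) xs"
  using assms(1,2)
proof (induction F rule: finite_induct)
  case (insert x F)
  then obtain xs where xs: "set xs = F" "distinct xs" "sorted_wrt (\<lambda>c d. (c, d) \<in> r) xs"
    by blast
  let ?lo = "filter (\<lambda>d. (d, x) \<in> r) xs" and ?hi = "filter (\<lambda>d. (d, x) \<notin> r) xs"
  have x_below: "(x, d) \<in> r" if "d \<in> set ?hi" for d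
  proof -
    have "d \<in> F" "(d, x) \<notin> r" using that xs(1) by auto
    moreover from this have "d \<noteq> x" "d \<in> A" "x \<in> A" using insert by auto
    ultimately show ?thesis using assms(4) unfolding total_on_def by blast
  qed
  have lo_below: "(d, e) \<in> r" if "d \<in> set ?lo" "e \<in> set (x # ?hi)" for d e
    using that x_below assms(3) unfolding trans_def by auto
  have "sorted_wrt (\<lambda>c d. (c, d) \<in> r) (?lo @ x # ?hi)"
    unfolding sorted_wrt_append sorted_wrt.simps(2)
    using sorted_wrt_filter[OF xs(3)] x_below lo_below by blast
  moreover have "set (?lo @ x # ?hi) = insert x F" "distinct (?lo @ x # ?hi)"
    using xs insert.hyps(2) by auto
  ultimately show ?case by blast
qed simp

lemma sorted_wrt_list_unique:
  assumes "antisym r" "set xs = set ys" "distinct xs" "distinct ys"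
    "sorted_wrt (\<lambda>c d. (c, d) \<in> r) xs" "sorted_wrt (\<lambda>c d. (c, d) \<in> r) ys"
  shows "xs = ys"
  using assms(2-)
proof (induction xs arbitrary: ys)
  case (Cons x xs)
  then obtain y ys' where ys: "ys = y # ys'" by (cases ys) auto
  have "x = y"
  proof (rule ccontr)
    assume "x \<noteq> y"
    then have "(x, y) \<in> r" "(y, x) \<in> r" using Cons.prems ys by auto
    then show False using assms(1) \<open>x \<noteq> y\<close> by (auto dest: antisymD)
  qed
  moreover have "set xs = set ys'"
    using Cons.prems ys \<open>x = y\<close> by (metis distinct.simps(2) Diff_insert_absorb list.set(2))
  ultimately show ?case using Cons ys by auto
qed simp

lemma finite_configs:
  fixes T :: "('s, 'g, 'q::finite) pebble_transducer"
  shows "finite (configs T w)"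
proof (rule finite_subset)
  show "configs T w \<subseteq> (SIGMA q:UNIV. {as. set as \<subseteq> {..<length w} \<and> length as = dim T q})"
    unfolding configs_def by force
  show "finite (SIGMA q:UNIV. {as. set as \<subseteq> {..<length w} \<and> length as = dim T q})"
    by (intro finite_SigmaI finite) (simp add: finite_lists_length_eq)
qed

lemma sorted_configs:
  fixes T :: "('s, 'g, 'q::finite) pebble_transducer" and w :: "('s + 'atom) list"
  assumes "valid_transducer T TYPE('atom)"
  shows "set (sorted_configs T w) = configs T w" "distinct (sorted_configs T w)"
proof -
  have lin: "trans (conf_ord T w)" "antisym (conf_ord T w)" "total_on (configs T w) (conf_ord T w)"
    using assms unfolding valid_transducer_def order_on_defs by auto
  let ?sorted = "\<lambda>xs. set xs = configs T w \<and> distinct xs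
                   \<and> sorted_wrt (\<lambda>c d. (c, d) \<in> conf_ord T w) xs"
  have "\<exists>!xs. ?sorted xs"
    using sorted_wrt_list_exists[OF finite_configs order_refl lin(1,3)]
      sorted_wrt_list_unique[OF lin(2)] by metis
  from theI'[OF this] show "set (sorted_configs T w) = configs T w" "distinct (sorted_configs T w)"
    unfolding sorted_configs_def by blast+
qed

lemma configs_stack_bound:
  fixes T :: "('s, 'g, 'q::finite) pebble_transducer"
  assumes "c \<in> configs T w"
  shows "length (snd c) \<le> num_pebbles T \<and> set (snd c) \<subseteq> {..<length w}"
  using assms Max_ge[of "range (dim T)"] unfolding configs_def num_pebbles_def by auto

lemma length_conf_out: "length (conf_out T w c) \<le> 1"
  by (cases c) (auto split: outp.split sum.split)

lemma conf_out_head_atom: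
  assumes "run T (map Inr u) = map Inr v" "c \<in> set (sorted_configs T (map Inr u))"
    and "snd c \<noteq> []" "last (snd c) < length u"
  shows "conf_out T (map Inr u) c = [Inr (u ! last (snd c))]"
proof (cases "out T (fst c)")
  case (OutLetter g)
  then have "Inl g \<in> set (run T (map Inr u))"
    using assms(2) unfolding run_def by (cases c) force
  with assms(1) show ?thesis by auto
next
  case OutHeadAtom
  with assms(3,4) show ?thesis by (cases c) simp
qed

lemma last_less_if_set_subset_lessThan:
  assumes "xs \<noteq> []" "set xs \<subseteq> {..<n}"
  shows "last xs < n"
  using assms last_in_set by blast

lemma nth_concat_equal_length:
  assumes "\<forall>xs\<in>set xss. length xs = m" "i < length xss" "j < m"
  shows "concat xss ! (i * m + j) = xss ! i ! j"
  using assms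
proof (induction xss arbitrary: i)
  case (Cons xs xss)
  then show ?case by (cases i) (auto simp: nth_append)
qed simp

lemma length_atom_square: "length (atom_square u) = length u * (2 * length u)"
  by (simp add: atom_square_def length_concat o_def sum_list_triv)

lemma atom_square_nth_even:
  assumes "p < length (atom_square u)" "even p"
  shows "atom_square u ! p = u ! (p div (2 * length u))"
proof -
  define n where "n = length u"
  define row where "row a = concat (map (\<lambda>b. [a, b]) u)" for a
  define i r where "i = p div (2 * n)" and "r = p mod (2 * n) div 2"
  have "p = i * (2 * n) + r * 2"
    using \<open>even p\<close> unfolding i_def r_def
    by (metis div_mult_mod_eq dvd_mod even_mult_iff even_numeral dvd_div_mult_self)
  moreover have "i < n"
    using assms(1) by (simp add: i_def length_atom_square n_def less_mult_imp_div_less)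
  moreover have "r < n"
  proof -
    have "0 < n" using assms(1) by (cases u) (simp_all add: length_atom_square n_def)
    then have "p mod (2 * n) < n * 2" by (simp add: mult.commute)
    then show ?thesis unfolding r_def by (rule less_mult_imp_div_less)
  qed
  moreover have "\<forall>xs\<in>set (map row u). length xs = 2 * n"
    by (simp add: row_def n_def length_concat o_def sum_list_triv)
  ultimately have "atom_square u ! p = row (u ! i) ! (r * 2 + 0)"
    using nth_concat_equal_length[of "map row u" "2 * n" i "r * 2"]
    by (simp add: atom_square_def row_def[abs_def] n_def)
  also have "\<dots> = u ! i"
    using \<open>r < n\<close> nth_concat_equal_length[of "map (\<lambda>b. [u ! i, b]) u" 2 r 0]
    by (simp add: row_def n_def)
  finally show ?thesis by (simp add: i_def n_def)
qed

lemma atom_square_even_nth_index: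
  assumes "distinct u" "p < length (atom_square u)" "even p" "i < length u"
    and "atom_square u ! p = u ! i"
  shows "i = p div (2 * length u)"
proof -
  have "p div (2 * length u) < length u"
    using assms(2) by (simp add: length_atom_square less_mult_imp_div_less)
  with assms show ?thesis by (simp add: atom_square_nth_even nth_eq_iff_index_eq)
qed

lemma stack_ok_hd_eq:
  assumes "stack_ok c d" "length (snd c) = 2" "length (snd d) = 2"
  shows "hd (snd c) = hd (snd d)"
  using assms unfolding stack_ok_def numeral_2_eq_2
  by (auto simp: length_Suc_conv prefix_def)

lemma stack_ok_chain_common_first_pebble:
  assumes "\<forall>i. Suc i < length L \<longrightarrow> stack_ok (L ! i) (L ! Suc i)" "a + M \<le> length L"
    and "\<And>m. m < M \<Longrightarrow> length (snd (L ! (a + m))) = 2"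
  shows "\<exists>x. \<forall>m<M. snd (L ! (a + m)) = [x, last (snd (L ! (a + m)))]"
proof -
  have hd_eq: "hd (snd (L ! (a + m))) = hd (snd (L ! a))" if "m < M" for m
    using that
  proof (induction m)
    case (Suc m)
    then have "hd (snd (L ! (a + m))) = hd (snd (L ! (a + Suc m)))"
      using assms assms(3)[of "Suc m"] by (intro stack_ok_hd_eq) simp_all
    then show ?case using Suc by simp
  qed simp
  have "snd (L ! (a + m)) = [hd (snd (L ! a)), last (snd (L ! (a + m)))]" if "m < M" for m
    using assms(3)[OF that] hd_eq[OF that] unfolding numeral_2_eq_2
    by (auto simp: length_Suc_conv)
  then show ?thesis by blast
qed

lemma concat_map_nth_singleton:
  assumes "i < length xs" "f (xs ! i) = [y]"
  shows "length (concat (map f (take i xs))) < length (concat (map f xs))"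
    and "concat (map f xs) ! length (concat (map f (take i xs))) = y"
proof -
  have "concat (map f xs) = concat (map f (take i xs)) @ y # concat (map f (drop (Suc i) xs))"
    using assms id_take_nth_drop[OF assms(1)]
    by (metis append_Cons append_Nil concat.simps(2) concat_append list.simps(9) map_append)
  then show "length (concat (map f (take i xs))) < length (concat (map f xs))"
    and "concat (map f xs) ! length (concat (map f (take i xs))) = y" by simp_all
qed

lemma concat_map_window_nth:
  assumes "a + M \<le> length L" "\<And>m. m < M \<Longrightarrow> f (L ! (a + m)) = [y m]" "m < M"
  shows "length (concat (map f (take a L))) + m < length (concat (map f L))"
    and "concat (map f L) ! (length (concat (map f (take a L))) + m) = y m"
proof -
  have "length (concat (map f (take (a + m) L))) = length (concat (map f (take a L))) + m"
    using assms(3)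
  proof (induction m)
    case (Suc m)
    have "take (a + Suc m) L = take (a + m) L @ [L ! (a + m)]"
      using Suc.prems assms(1) by (simp add: take_Suc_conv_app_nth)
    then show ?case using Suc assms(2)[of m] by simp
  qed simp
  moreover have "a + m < length L" using assms(1,3) by simp
  ultimately show "length (concat (map f (take a L))) + m < length (concat (map f L))"
    and "concat (map f L) ! (length (concat (map f (take a L))) + m) = y m"
    using concat_map_nth_singleton[of "a + m" L f "y m"] assms(2,3) by simp_all
qed

lemma div_mem_consecutive:
  assumes "s \<le> p" "p < s + d" "0 < d"
  shows "p div d \<in> {s div d, Suc (s div d)}"
proof -
  have "s div d \<le> p div d" using assms(1) by (rule div_le_mono)
  moreover have "p div d \<le> (s + d) div d" using assms(2) by (intro div_le_mono) simp
  moreover have "(s + d) div d = Suc (s div d)" using assms(3) by (simp add: div_add_self2)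
  ultimately show ?thesis by auto
qed

lemma window_has_short_stack:
  fixes L :: "('q::finite \<times> nat list) list" and u :: "'a list"
    and out :: "'q \<times> nat list \<Rightarrow> ('b + 'a) list"
  assumes L: "distinct L" "\<forall>i. Suc i < length L \<longrightarrow> stack_ok (L ! i) (L ! Suc i)"
    and u: "distinct u" "4 * CARD('q) + 2 \<le> 2 * length u"
    and spell: "concat (map out L) = map Inr (atom_square u)"
    and stacks: "\<And>c. c \<in> set L \<Longrightarrow> set (snd c) \<subseteq> {..<length u}"
    and head_out:
      "\<And>c. c \<in> set L \<Longrightarrow> length (snd c) = 2 \<Longrightarrow> out c = [Inr (u ! last (snd c))]"
    and window: "a + (4 * CARD('q) + 2) \<le> length L"
  shows "\<exists>t. a \<le> t \<and> t < a + (4 * CARD('q) + 2) \<and> length (snd (L ! t)) \<noteq> 2"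
proof (rule ccontr)
  define k M n where "k = CARD('q)" and "M = 4 * k + 2" and "n = length u"
  assume "\<not> ?thesis"
  then have two: "length (snd (L ! (a + m))) = 2" if "m < M" for m
    using that by (auto simp: M_def k_def)
  have in_L: "L ! (a + m) \<in> set L" if "m < M" for m
    using that window by (simp add: M_def k_def)
  obtain x where x: "\<And>m. m < M \<Longrightarrow> snd (L ! (a + m)) = [x, last (snd (L ! (a + m)))]"
    using stack_ok_chain_common_first_pebble[OF L(2), of a M] window two by (auto simp: M_def k_def)
  define s where "s = length (concat (map out (take a L)))"
  have spelled: "s + m < length (atom_square u)
      \<and> atom_square u ! (s + m) = u ! last (snd (L ! (a + m)))" if "m < M" for m
    using concat_map_window_nth[of a M L out "\<lambda>m. Inr (u ! last (snd (L ! (a + m))))",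
        OF _ _ that]
      window head_out[OF in_L two] spell
    by (simp add: s_def M_def k_def)
  define v where "v = s div (2 * n)"
  have heads: "snd (L ! (a + s mod 2 + 2 * j)) \<in> {[x, v], [x, Suc v]}" if "j \<le> 2 * k" for j
  proof -
    define m where "m = s mod 2 + 2 * j"
    define p where "p = s + m"
    have "m < M" using that by (simp add: m_def M_def)
    then have p: "p < length (atom_square u)" "atom_square u ! p = u ! last (snd (L ! (a + m)))"
      using spelled by (simp_all add: p_def)
    moreover have "even p" by (simp add: p_def m_def)
    moreover have "last (snd (L ! (a + m))) < n"
      using stacks[OF in_L] two[OF \<open>m < M\<close>] \<open>m < M\<close>
      by (intro last_less_if_set_subset_lessThan) (auto simp: n_def)
    ultimately have last_eq: "last (snd (L ! (a + m))) = p div (2 * n)"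
      using atom_square_even_nth_index[OF u(1)] by (simp add: n_def)
    have "p div (2 * n) \<in> {v, Suc v}"
      unfolding v_def using \<open>m < M\<close> u(2)
      by (intro div_mem_consecutive) (auto simp: p_def M_def k_def n_def)
    then show ?thesis using x[OF \<open>m < M\<close>] last_eq by (auto simp: m_def add.assoc)
  qed
  have "inj_on (\<lambda>j. L ! (a + s mod 2 + 2 * j)) {..2 * k}"
  proof (rule inj_onI)
    fix i j assume "i \<in> {..2 * k}" "j \<in> {..2 * k}"
      and "L ! (a + s mod 2 + 2 * i) = L ! (a + s mod 2 + 2 * j)"
    moreover have "a + s mod 2 + 2 * i < length L" "a + s mod 2 + 2 * j < length L"
      using \<open>i \<in> {..2 * k}\<close> \<open>j \<in> {..2 * k}\<close> window by (auto simp: k_def)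
    ultimately show "i = j" using L(1) by (simp add: nth_eq_iff_index_eq)
  qed
  moreover have "(\<lambda>j. L ! (a + s mod 2 + 2 * j)) ` {..2 * k} \<subseteq> UNIV \<times> {[x, v], [x, Suc v]}"
    using heads by (auto simp: mem_Times_iff) (metis snd_conv)
  ultimately have "card {..2 * k} \<le> card (UNIV \<times> {[x, v], [x, Suc v]} :: ('q \<times> nat list) set)"
    by (intro card_inj_on_le) simp_all
  also have "\<dots> \<le> k * 2" by (simp add: card_cartesian_product k_def card_insert_le)
  finally show False by simp
qed

lemma div_le_card_if_windows_meet:
  assumes "0 < M" "finite B" "\<And>a. a + M \<le> N \<Longrightarrow> \<exists>t\<in>B. a \<le> t \<and> t < a + M"
  shows "N div M \<le> card B"
proof -
  have "{..<N div M} \<subseteq> (\<lambda>t. t div M) ` B"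
  proof
    fix c assume "c \<in> {..<N div M}"
    then have "Suc c * M \<le> N div M * M" by (intro mult_le_mono1) simp
    then have "c * M + M \<le> N"
      using div_times_less_eq_dividend[of N M] by (metis add.commute mult_Suc le_trans)
    then obtain t where "t \<in> B" "c * M \<le> t" "t < c * M + M" using assms(3) by blast
    then have "t div M = c" by (simp add: div_nat_eqI mult.commute)
    with \<open>t \<in> B\<close> show "c \<in> (\<lambda>t. t div M) ` B" by blast
  qed
  then have "card {..<N div M} \<le> card ((\<lambda>t. t div M) ` B)"
    using assms(2) by (intro card_mono) auto
  also have "\<dots> \<le> card B" using assms(2) by (rule card_image_le)
  finally show ?thesis by simp
qed

lemma atom_square_run_bound:
  fixes L :: "('q::finite \<times> nat list) list" and u :: "'a list"
    and out :: "'q \<times> nat list \<Rightarrow> ('b + 'a) list"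
  assumes L: "distinct L" "\<forall>i. Suc i < length L \<longrightarrow> stack_ok (L ! i) (L ! Suc i)"
    and u: "distinct u" "4 * CARD('q) + 2 \<le> 2 * length u"
    and stacks: "\<And>c. c \<in> set L \<Longrightarrow> length (snd c) \<le> 2 \<and> set (snd c) \<subseteq> {..<length u}"
    and spell: "concat (map out L) = map Inr (atom_square u)"
    and out_le: "\<And>c. length (out c) \<le> 1"
    and head_out:
      "\<And>c. c \<in> set L \<Longrightarrow> length (snd c) = 2 \<Longrightarrow> out c = [Inr (u ! last (snd c))]"
  shows "length u * (2 * length u) div (4 * CARD('q) + 2) \<le> CARD('q) * (length u + 1)"
proof -
  define B where "B = {t. t < length L \<and> length (snd (L ! t)) \<noteq> 2}"
  define S where "S = {xs. set xs \<subseteq> {..<length u} \<and> length xs \<le> 1}"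
  have "length u * (2 * length u) \<le> length L"
  proof -
    have "length (concat (map out L)) \<le> sum_list (map (\<lambda>_. 1) L)"
      unfolding length_concat map_map by (intro sum_list_mono) (use out_le in simp)
    then show ?thesis using spell by (simp add: length_atom_square sum_list_triv)
  qed
  then have "length u * (2 * length u) div (4 * CARD('q) + 2) \<le> length L div (4 * CARD('q) + 2)"
    by (rule div_le_mono)
  also have "\<dots> \<le> card B"
  proof (rule div_le_card_if_windows_meet)
    fix a assume "a + (4 * CARD('q) + 2) \<le> length L"
    then obtain t where "a \<le> t" "t < a + (4 * CARD('q) + 2)" "length (snd (L ! t)) \<noteq> 2"
      using window_has_short_stack[OF L u spell _ head_out, of a] stacks by blast
    then show "\<exists>t\<in>B. a \<le> t \<and> t < a + (4 * CARD('q) + 2)"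
      using \<open>a + (4 * CARD('q) + 2) \<le> length L\<close> unfolding B_def
      by (intro bexI[of _ t]) simp_all
  qed (simp_all add: B_def)
  also have "card B \<le> card ((UNIV :: 'q set) \<times> S)"
  proof (rule card_inj_on_le)
    show "inj_on (\<lambda>t. L ! t) B" using L(1) by (auto simp: B_def inj_on_def nth_eq_iff_index_eq)
    show "(\<lambda>t. L ! t) ` B \<subseteq> UNIV \<times> S"
    proof
      fix c assume "c \<in> (\<lambda>t. L ! t) ` B"
      then obtain t where "t < length L" "length (snd c) \<noteq> 2" "c = L ! t" by (auto simp: B_def)
      with stacks[of c] have "snd c \<in> S" by (simp add: S_def)
      then show "c \<in> UNIV \<times> S" by (simp add: mem_Times_iff)
    qed
    show "finite ((UNIV :: 'q set) \<times> S)"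
      unfolding S_def by (intro finite_cartesian_product finite_lists_length_le) simp_all
  qed
  also have "\<dots> = CARD('q) * (length u + 1)"
    using card_lists_length_le[of "{..<length u}" 1] by (simp add: card_cartesian_product S_def)
  finally show ?thesis .
qed

lemma two_pebble_transducer_atom_square_bound:
  fixes T :: "('s, 'g, 'q::finite) pebble_transducer" and u :: "'atom list"
  assumes "valid_transducer T TYPE('atom)" "num_pebbles T \<le> 2" "computes_atom_square T TYPE('atom)"
    and "distinct u" "4 * CARD('q) + 2 \<le> 2 * length u"
  shows "length u * (2 * length u) div (4 * CARD('q) + 2) \<le> CARD('q) * (length u + 1)"
proof -
  define w :: "('s + 'atom) list" where "w = map Inr u"
  define L where "L = sorted_configs T w"
  have stacks: "length (snd c) \<le> 2 \<and> set (snd c) \<subseteq> {..<length u}" if "c \<in> set L" for c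
    using configs_stack_bound[of c T w] that assms(2) sorted_configs[OF assms(1)]
    by (auto simp: L_def w_def)
  have run: "run T w = map Inr (atom_square u)"
    using assms(3) unfolding computes_atom_square_def w_def by blast
  show ?thesis
  proof (rule atom_square_run_bound[of L])
    show "distinct L" using sorted_configs[OF assms(1)] by (simp add: L_def)
    show "\<forall>i. Suc i < length L \<longrightarrow> stack_ok (L ! i) (L ! Suc i)"
      using assms(1) unfolding valid_transducer_def L_def by blast
    show "concat (map (conf_out T w) L) = map Inr (atom_square u)"
      using run by (simp add: run_def L_def)
    show "conf_out T w c = [Inr (u ! last (snd c))]" if "c \<in> set L" "length (snd c) = 2" for c
      unfolding w_def
    proof (rule conf_out_head_atom[OF run[unfolded w_def]])
      show "last (snd c) < length u"
        using that stacks[OF that(1)] by (intro last_less_if_set_subset_lessThan) auto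
    qed (use that in \<open>auto simp: L_def w_def\<close>)
  qed (use assms(4,5) stacks length_conf_out in simp_all)
qed

theorem mainTheorem8:
  fixes T :: "('s::finite, 'g::finite, 'q::finite) pebble_transducer"
  assumes "infinite (UNIV :: 'atom set)"
    and "valid_transducer T TYPE('atom)"
    and "num_pebbles T \<le> 2"
  shows "\<not> computes_atom_square T TYPE('atom)"
proof
  assume computes: "computes_atom_square T TYPE('atom)"
  define k where "k = CARD('q)"
  define n where "n = (4 * k + 2) * (k + 1)"
  obtain X :: "'atom set" where "finite X" "card X = n"
    using infinite_arbitrarily_large[OF assms(1)] by blast
  then obtain u :: "'atom list" where u: "distinct u" "length u = n"
    by (metis finite_distinct_list distinct_card)
  have "4 * k + 2 \<le> 2 * length u" by (simp add: u(2) n_def)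
  then have "n * (2 * n) div (4 * k + 2) \<le> k * (n + 1)"
    using two_pebble_transducer_atom_square_bound[OF assms(2,3) computes u(1)] by (simp add: k_def u(2))
  moreover have "n * (2 * n) div (4 * k + 2) = (k + 1) * (2 * n)"
  proof -
    have "n * (2 * n) = (4 * k + 2) * ((k + 1) * (2 * n))" by (simp only: n_def mult.assoc)
    then show ?thesis by (metis div_mult_self1_is_m zero_less_Suc add_2_eq_Suc')
  qed
  moreover have "k * (n + 1) < (k + 1) * (2 * n)"
    by (simp add: n_def algebra_simps)
  ultimately show False by linarith
qed

end
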